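(* Let $(A,v)\in\mathfrak g\times V$ satisfy $\langle A^kv,v\rangle=0$ for all integers $k\ge0$. Then: (i) if $\mathfrak g=\mathfrak u$ or $\mathfrak g=\mathfrak{sp}$, then for every $\lambda\in\mathbb{K}$ (required to satisfy $\bar\lambda=-\lambda$ in the case $\mathfrak u$) the operator $A+\lambda\phi_v$ has the same characteristic polynomial as $A$; (ii) if $\mathfrak g=\mathfrak o$, then for every $\lambda\in\mathbb{F}$ the operator $A+\lambda A\phi_v+\lambda\phi_vA$ has the same characteristic polynomial as $A$.
   Context: $\mathbb{K}=\mathbb{F}$ or a quadratic extension of a field $\mathbb{F}$ of characteristic $\neq2$, with conjugation $\lambda\mapsto\bar\lambda$. $V$ is a finite-dimensional $\mathbb{K}$-space with a non-degenerate form $\langle\cdot,\cdot\rangle$ (linear in the first variable) which is symmetric ($\mathfrak g=\mathfrak o$), Hermitian ($\mathfrak g=\mathfrak u$) or symplectic ($\mathfrak g=\mathfrak{sp}$), and $\mathfrak g=\{A:A^*=-A\}$. For $v\in V$, $\phi_v$ is the operator $u\mapsto\langle u,v\rangle v$. *)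

theory Defs
  imports "Jordan_Normal_Form.Char_Poly"
begin

text \<open>V = K^n (column vectors), the form is given by a Gram matrix G:
  form G cj u v = u^T G conj(v), linear in the first variable,
  conjugate-linear in the second.\<close>

definition form :: "('a::field) mat \<Rightarrow> ('a \<Rightarrow> 'a) \<Rightarrow> 'a vec \<Rightarrow> 'a vec \<Rightarrow> 'a" where
  "form G cj u v = u \<bullet> (G *\<^sub>v map_vec cj v)"

text \<open>A field involution (conjugation); identity means K = F.\<close>
definition conjugation :: "('a::field \<Rightarrow> 'a) \<Rightarrow> bool" where
  "conjugation cj \<longleftrightarrow> (\<forall>x y. cj (x + y) = cj x + cj y) \<and> (\<forall>x y. cj (x * y) = cj x * cj y)
     \<and> cj 1 = 1 \<and> (\<forall>x. cj (cj x) = x)"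

definition nondegenerate :: "nat \<Rightarrow> ('a::field) mat \<Rightarrow> ('a \<Rightarrow> 'a) \<Rightarrow> bool" where
  "nondegenerate n G cj \<longleftrightarrow>
     (\<forall>u\<in>carrier_vec n. (\<forall>w\<in>carrier_vec n. form G cj u w = 0) \<longrightarrow> u = 0\<^sub>v n)"

definition in_g :: "nat \<Rightarrow> ('a::field) mat \<Rightarrow> ('a \<Rightarrow> 'a) \<Rightarrow> 'a mat \<Rightarrow> bool" where
  "in_g n G cj A \<longleftrightarrow> A \<in> carrier_mat n n \<and>
     (\<forall>u\<in>carrier_vec n. \<forall>w\<in>carrier_vec n. form G cj (A *\<^sub>v u) w = - form G cj u (A *\<^sub>v w))"

definition phi :: "nat \<Rightarrow> ('a::field) mat \<Rightarrow> ('a \<Rightarrow> 'a) \<Rightarrow> 'a vec \<Rightarrow> 'a mat" where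
  "phi n G cj v = mat n n (\<lambda>(i,j). form G cj (unit_vec n j) v * v $ i)"

end

theory Submission
  imports Defs
begin

text \<open>
  With \<open>w = G conj(v)\<close> we have \<open>\<langle>A\<^sup>k v, v\<rangle> = w\<^sup>T A\<^sup>k v\<close> and \<open>\<phi>\<^sub>v = v w\<^sup>T\<close>, so the
  claim is about rank-one updates \<open>u w\<^sup>T\<close> with \<open>w\<close> orthogonal to the Krylov space of \<open>A\<close> at
  \<open>u\<close>. By the matrix determinant lemma, \<open>det (X - A - u w\<^sup>T) = \<chi>\<^sub>A - h u\<close> with
  \<open>h z = w\<^sup>T adj (X - A) z\<close>. From \<open>adj (X - A) A = X adj (X - A) - \<chi>\<^sub>A\<close> one gets
  \<open>h (A z) = X h z - \<chi>\<^sub>A w\<^sup>T z\<close>, hence \<open>h (A\<^sup>k u) = X\<^sup>k h u\<close>; as \<open>h\<close> has bounded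
  degree, \<open>h u = 0\<close>. The perturbation in case (ii) is \<open>(A v) w\<^sup>T + v (A\<^sup>T w)\<^sup>T\<close> up to the
  factor \<open>\<lambda>\<close>: two such updates in succession, the first of which leaves the Krylov sequence
  of \<open>v\<close> unchanged.
\<close>

definition outer_mat :: "'a::comm_ring_1 vec \<Rightarrow> 'a vec \<Rightarrow> 'a mat" where
  "outer_mat a b = mat (dim_vec a) (dim_vec b) (\<lambda>(i,j). a $ i * b $ j)"

lemma dim_outer_mat[simp]:
  "dim_row (outer_mat a b) = dim_vec a" "dim_col (outer_mat a b) = dim_vec b"
  by (simp_all add: outer_mat_def)

lemma outer_mat_carrier[simp]:
  "a \<in> carrier_vec n \<Longrightarrow> b \<in> carrier_vec m \<Longrightarrow> outer_mat a b \<in> carrier_mat n m"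
  by (simp add: outer_mat_def)

lemma outer_mat_mult_vec:
  assumes "b \<in> carrier_vec m" "x \<in> carrier_vec m"
  shows "outer_mat a b *\<^sub>v x = (b \<bullet> x) \<cdot>\<^sub>v a"
  using assms by (intro eq_vecI) (auto simp: outer_mat_def scalar_prod_def sum_distrib_left ac_simps)

lemma mult_outer_mat:
  assumes "M \<in> carrier_mat n n" "a \<in> carrier_vec n"
  shows "M * outer_mat a b = outer_mat (M *\<^sub>v a) b"
  using assms by (intro eq_matI) (auto simp: outer_mat_def scalar_prod_def sum_distrib_left ac_simps)

lemma outer_mat_mult:
  assumes "M \<in> carrier_mat n n" "b \<in> carrier_vec n"
  shows "outer_mat a b * M = outer_mat a (transpose_mat M *\<^sub>v b)"
  using assms by (intro eq_matI) (auto simp: outer_mat_def scalar_prod_def sum_distrib_left ac_simps)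

lemma smult_outer_mat: "c \<cdot>\<^sub>m outer_mat a b = outer_mat a (c \<cdot>\<^sub>v b)"
  by (intro eq_matI) (auto simp: outer_mat_def ac_simps)

lemma det_bordered_mat:
  fixes M :: "'a::idom mat"
  assumes M: "M \<in> carrier_mat n n" and a: "a \<in> carrier_vec n" and b: "b \<in> carrier_vec n"
  shows "det (four_block_mat (1\<^sub>m 1) (- mat_of_row b) (mat_of_row a)\<^sup>T M) = det (M + outer_mat a b)"
proof -
  let ?r = "mat_of_row b" and ?c = "(mat_of_row a)\<^sup>T"
  let ?P = "four_block_mat (1\<^sub>m 1) (0\<^sub>m 1 n) ?c (M + outer_mat a b)"
  let ?U = "four_block_mat (1\<^sub>m 1) (- ?r) (0\<^sub>m n 1) (1\<^sub>m n)"
  have r: "?r \<in> carrier_mat 1 n" and c: "?c \<in> carrier_mat n 1"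
    and Mab: "M + outer_mat a b \<in> carrier_mat n n"
    using M a b by auto
  have "?P * ?U = four_block_mat (1\<^sub>m 1 * 1\<^sub>m 1 + 0\<^sub>m 1 n * 0\<^sub>m n 1) (1\<^sub>m 1 * - ?r + 0\<^sub>m 1 n * 1\<^sub>m n)
      (?c * 1\<^sub>m 1 + (M + outer_mat a b) * 0\<^sub>m n 1) (?c * - ?r + (M + outer_mat a b) * 1\<^sub>m n)"
    using r c Mab by (intro mult_four_block_mat) auto
  also have "\<dots> = four_block_mat (1\<^sub>m 1) (- ?r) ?c M"
    using M a b by (intro cong_four_block_mat eq_matI) (auto simp: outer_mat_def scalar_prod_def)
  finally have "det (four_block_mat (1\<^sub>m 1) (- ?r) ?c M) = det ?P * det ?U"
    using r c Mab by (metis det_mult four_block_carrier_mat minus_carrier_mat one_carrier_mat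
        zero_carrier_mat)
  also have "det ?P = det (M + outer_mat a b)"
    by (subst det_four_block_mat_upper_right_zero[OF one_carrier_mat refl c Mab]) simp
  also have "det ?U = 1"
    using r by (subst det_four_block_mat_lower_left_zero[OF one_carrier_mat _ refl one_carrier_mat]) auto
  finally show ?thesis by simp
qed

lemma det_bordered_mat_mult_adj:
  fixes M :: "'a::idom mat"
  assumes M: "M \<in> carrier_mat n n" and a: "a \<in> carrier_vec n" and b: "b \<in> carrier_vec n"
  shows "det (four_block_mat (1\<^sub>m 1) (- mat_of_row b) (mat_of_row a)\<^sup>T M) * det M ^ n
    = (det M + b \<bullet> (adj_mat M *\<^sub>v a)) * det M ^ n"
proof -
  define d where "d = det M"
  define y where "y = adj_mat M *\<^sub>v a"
  let ?r = "mat_of_row b" and ?c = "\<lambda>x. (mat_of_row x)\<^sup>T"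
  let ?L = "four_block_mat (1\<^sub>m 1) (- ?r) (?c a) M"
  let ?Q = "four_block_mat (d \<cdot>\<^sub>m 1\<^sub>m 1) (0\<^sub>m 1 n) (- ?c y) (adj_mat M)"
  let ?R = "four_block_mat ((d + b \<bullet> y) \<cdot>\<^sub>m 1\<^sub>m 1) (- ?r * adj_mat M) (0\<^sub>m n 1) (d \<cdot>\<^sub>m 1\<^sub>m n)"
  note adj = adj_mat[OF M, folded d_def]
  have y: "y \<in> carrier_vec n" using adj a by (simp add: y_def)
  have r: "?r \<in> carrier_mat 1 n" and ca: "?c a \<in> carrier_mat n 1" and cy: "?c y \<in> carrier_mat n 1"
    using a b y by auto
  have My: "M *\<^sub>v y = d \<cdot>\<^sub>v a"
    using M adj a by (simp add: y_def assoc_mult_mat_vec[symmetric, of _ n n _ n])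
      (auto intro!: eq_vecI simp: scalar_prod_def if_distrib[of "\<lambda>x. d * x"]
        if_distrib[of "\<lambda>x. x * a $ _"] cong: if_cong)
  have "?L * ?Q = four_block_mat (1\<^sub>m 1 * (d \<cdot>\<^sub>m 1\<^sub>m 1) + - ?r * - ?c y) (1\<^sub>m 1 * 0\<^sub>m 1 n + - ?r * adj_mat M)
      (?c a * (d \<cdot>\<^sub>m 1\<^sub>m 1) + M * - ?c y) (?c a * 0\<^sub>m 1 n + M * adj_mat M)"
    using M r ca cy adj by (intro mult_four_block_mat) auto
  also have "\<dots> = ?R"
  proof (rule cong_four_block_mat)
    have "M * - ?c y = - ?c (M *\<^sub>v y)"
      using M y by (intro eq_matI) (auto simp: scalar_prod_def sum_negf)
    then show "?c a * (d \<cdot>\<^sub>m 1\<^sub>m 1) + M * - ?c y = 0\<^sub>m n 1"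
      using a by (intro eq_matI) (auto simp: My)
  qed (insert a b y adj, auto intro!: eq_matI simp: scalar_prod_def sum_negf)
  finally have "det ?L * det ?Q = det ?R"
    using M r ca cy adj
    by (metis det_mult four_block_carrier_mat minus_carrier_mat one_carrier_mat smult_carrier_mat
        uminus_carrier_mat zero_carrier_mat)
  moreover have "det ?Q = d ^ n"
    using det_mult[OF M adj(1)] adj cy
    by (subst det_four_block_mat_upper_right_zero[OF _ refl _ adj(1)]) (auto simp: d_def)
  moreover have "det ?R = (d + b \<bullet> y) * d ^ n"
    using adj r by (subst det_four_block_mat_lower_left_zero[OF _ _ refl]) auto
  ultimately show ?thesis by (simp add: d_def y_def)
qed

lemma det_add_outer_mat:
  fixes M :: "'a::idom mat"
  assumes M: "M \<in> carrier_mat n n" and a: "a \<in> carrier_vec n" and b: "b \<in> carrier_vec n"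
    and nonsing: "det M \<noteq> 0"
  shows "det (M + outer_mat a b) = det M + b \<bullet> (adj_mat M *\<^sub>v a)"
  using det_bordered_mat_mult_adj[OF M a b] nonsing
  unfolding det_bordered_mat[OF M a b] by simp

lemma pow_mat_Suc_mult_vec:
  assumes A: "A \<in> carrier_mat n n" and v: "v \<in> carrier_vec n"
  shows "(A ^\<^sub>m Suc k) *\<^sub>v v = A *\<^sub>v ((A ^\<^sub>m k) *\<^sub>v v)"
proof -
  have "A ^\<^sub>m Suc k = A * A ^\<^sub>m k"
  proof (induction k)
    case (Suc k)
    have "A ^\<^sub>m Suc (Suc k) = (A * A ^\<^sub>m k) * A" using Suc by simp
    also have "\<dots> = A * (A ^\<^sub>m k * A)" using A by (simp add: assoc_mult_mat[of _ n n _ n _ n])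
    finally show ?case by simp
  qed (use A in simp)
  then show ?thesis using A v by (simp add: assoc_mult_mat_vec[of _ n n _ n])
qed

lemma pow_add_outer_mat_mult_vec:
  assumes A: "A \<in> carrier_mat n n" and u: "u \<in> carrier_vec n" and w: "w \<in> carrier_vec n"
    and v: "v \<in> carrier_vec n" and krylov: "\<And>k. w \<bullet> ((A ^\<^sub>m k) *\<^sub>v v) = 0"
  shows "((A + outer_mat u w) ^\<^sub>m k) *\<^sub>v v = (A ^\<^sub>m k) *\<^sub>v v"
proof (induction k)
  case (Suc k)
  have B: "A + outer_mat u w \<in> carrier_mat n n" and Akv: "(A ^\<^sub>m k) *\<^sub>v v \<in> carrier_vec n"
    using A u w v by (auto intro: mult_mat_vec_carrier pow_carrier_mat)
  have "((A + outer_mat u w) ^\<^sub>m Suc k) *\<^sub>v v = (A + outer_mat u w) *\<^sub>v ((A ^\<^sub>m k) *\<^sub>v v)"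
    using Suc by (simp only: pow_mat_Suc_mult_vec[OF B v])
  also have "\<dots> = A *\<^sub>v ((A ^\<^sub>m k) *\<^sub>v v) + outer_mat u w *\<^sub>v ((A ^\<^sub>m k) *\<^sub>v v)"
    using A u w by (intro add_mult_distrib_mat_vec[OF A _ Akv]) simp
  also have "outer_mat u w *\<^sub>v ((A ^\<^sub>m k) *\<^sub>v v) = 0\<^sub>v n"
    using Akv u w krylov by (intro eq_vecI) (auto simp: outer_mat_mult_vec)
  finally show ?case
    using A Akv by (simp del: pow_mat.simps add: pow_mat_Suc_mult_vec[OF A v])
qed (use A u v in simp)

lemma eq_0_if_shift_orbit_bounded_degree:
  fixes g :: "nat \<Rightarrow> 'a::idom poly"
  assumes shift: "\<And>k. g (Suc k) = [:0,1:] * g k" and bounded: "\<And>k. degree (g k) \<le> D"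
  shows "g 0 = 0"
proof (rule ccontr)
  assume nz: "g 0 \<noteq> 0"
  have orbit: "g k = [:0,1:] ^ k * g 0" for k
    by (induction k) (simp_all add: shift)
  have "degree (g (Suc D)) = degree ([:0,1:] ^ Suc D :: 'a poly) + degree (g 0)"
    unfolding orbit[of "Suc D"] using nz by (intro degree_mult_eq) simp_all
  also have "degree ([:0,1:] ^ Suc D :: 'a poly) = Suc D"
    by (rule degree_linear_power)
  finally show False using bounded[of "Suc D"] by simp
qed

lemma degree_scalar_prod_const_poly_le:
  assumes p: "p \<in> carrier_vec n" and z: "z \<in> carrier_vec n"
  shows "degree (p \<bullet> map_vec (\<lambda>x. [:x:]) z) \<le> (\<Sum>i<n. degree (p $ i))"
proof -
  have "degree (p $ i * [:z $ i:]) \<le> (\<Sum>i<n. degree (p $ i))" if "i < n" for i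
    using degree_mult_le[of "p $ i" "[:z $ i:]"] member_le_sum[of i "{..<n}" "\<lambda>i. degree (p $ i)"] that
    by simp
  then show ?thesis
    using p z unfolding scalar_prod_def by (auto intro!: degree_sum_le)
qed

lemma scalar_prod_const_poly:
  assumes "v \<in> carrier_vec n" and "w \<in> carrier_vec n"
  shows "map_vec (\<lambda>x. [:x:]) v \<bullet> map_vec (\<lambda>x. [:x:]) w = [:v \<bullet> (w :: 'a::comm_ring_1 vec):]"
proof -
  have "(\<Sum>i\<in>S. [:f i:]) = [:\<Sum>i\<in>S. f i:]" for S and f :: "nat \<Rightarrow> 'a"
    by (induction S rule: infinite_finite_induct) auto
  then show ?thesis using assms by (simp add: scalar_prod_def mult.commute)
qed

lemma adj_char_poly_matrix_mult:
  assumes A: "A \<in> carrier_mat n n"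
  shows "adj_mat (char_poly_matrix A) * map_mat (\<lambda>x. [:x:]) A
    = [:0,1:] \<cdot>\<^sub>m adj_mat (char_poly_matrix A) - char_poly A \<cdot>\<^sub>m 1\<^sub>m n"
proof -
  define M where "M = char_poly_matrix A"
  have M: "M \<in> carrier_mat n n" using A by (simp add: M_def)
  note adj = adj_mat[OF M]
  have "map_mat (\<lambda>x. [:x:]) A = [:0,1:] \<cdot>\<^sub>m 1\<^sub>m n - M"
    using A by (intro eq_matI) (auto simp: M_def char_poly_matrix_def)
  then have "adj_mat M * map_mat (\<lambda>x. [:x:]) A = adj_mat M * ([:0,1:] \<cdot>\<^sub>m 1\<^sub>m n) - adj_mat M * M"
    using M adj by (simp add: mult_minus_distrib_mat[OF adj(1) smult_carrier_mat[OF one_carrier_mat] M])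
  also have "\<dots> = [:0,1:] \<cdot>\<^sub>m adj_mat M - char_poly A \<cdot>\<^sub>m 1\<^sub>m n"
    using adj by (simp add: mult_smult_distrib[of _ n n _ n] M_def char_poly_def)
  finally show ?thesis by (simp add: M_def)
qed

lemma adj_char_poly_matrix_krylov_eq_0:
  fixes A :: "'a::idom mat"
  assumes A: "A \<in> carrier_mat n n" and u: "u \<in> carrier_vec n" and w: "w \<in> carrier_vec n"
    and krylov: "\<And>k. w \<bullet> ((A ^\<^sub>m k) *\<^sub>v u) = 0"
  shows "map_vec (\<lambda>x. [:x:]) w \<bullet> (adj_mat (char_poly_matrix A) *\<^sub>v map_vec (\<lambda>x. [:x:]) u) = 0"
proof -
  define L where "L = map_vec (\<lambda>x::'a. [:x:])"
  define Y where "Y = adj_mat (char_poly_matrix A)"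
  define h where "h z = L w \<bullet> (Y *\<^sub>v L z)" for z
  have Y: "Y \<in> carrier_mat n n" using A by (simp add: Y_def adj_mat)
  have Lw: "L w \<in> carrier_vec n" using w by (simp add: L_def)
  have Aku: "(A ^\<^sub>m k) *\<^sub>v u \<in> carrier_vec n" for k
    by (rule mult_mat_vec_carrier[OF pow_carrier_mat[OF A] u])
  interpret const: comm_ring_hom "\<lambda>x::'a. [:x:]" by unfold_locales auto
  have shift: "h (A *\<^sub>v z) = [:0,1:] * h z - char_poly A * [:w \<bullet> z:]"
    if z: "z \<in> carrier_vec n" for z
  proof -
    have Lz: "L z \<in> carrier_vec n" using z by (simp add: L_def)
    have "Y *\<^sub>v L (A *\<^sub>v z) = (Y * map_mat (\<lambda>x. [:x:]) A) *\<^sub>v L z"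
      using A Y Lz z by (simp add: L_def const.mult_mat_vec_hom assoc_mult_mat_vec[of _ n n _ n])
    also have "\<dots> = ([:0,1:] \<cdot>\<^sub>m Y) *\<^sub>v L z - (char_poly A \<cdot>\<^sub>m 1\<^sub>m n) *\<^sub>v L z"
      unfolding adj_char_poly_matrix_mult[OF A, folded Y_def]
      using Y Lz by (intro minus_mult_distrib_mat_vec) auto
    also have "\<dots> = [:0,1:] \<cdot>\<^sub>v (Y *\<^sub>v L z) - char_poly A \<cdot>\<^sub>v L z"
      using Y Lz by (intro eq_vecI) auto
    finally show ?thesis
      using Y Lz Lw z w by (simp add: h_def scalar_prod_minus_distrib[of _ n] L_def scalar_prod_const_poly)
  qed
  have "h ((A ^\<^sub>m 0) *\<^sub>v u) = 0"
  proof (rule eq_0_if_shift_orbit_bounded_degree)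
    show "h ((A ^\<^sub>m Suc k) *\<^sub>v u) = [:0,1:] * h ((A ^\<^sub>m k) *\<^sub>v u)" for k
      using shift[OF Aku] krylov[of k]
      by (simp del: pow_mat.simps add: pow_mat_Suc_mult_vec[OF A u])
    have h_transpose: "h z = (transpose_mat Y *\<^sub>v L w) \<bullet> L z" if "z \<in> carrier_vec n" for z
      using Y Lw that by (simp add: h_def L_def transpose_vec_mult_scalar)
    show "degree (h ((A ^\<^sub>m k) *\<^sub>v u)) \<le> (\<Sum>i<n. degree ((transpose_mat Y *\<^sub>v L w) $ i))" for k
      unfolding h_transpose[OF Aku] L_def
      using Aku Y w by (intro degree_scalar_prod_const_poly_le) auto
  qed
  then show ?thesis using A u by (simp add: h_def L_def Y_def)
qed

lemma char_poly_add_outer_mat: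
  fixes A :: "'a::idom mat"
  assumes A: "A \<in> carrier_mat n n" and u: "u \<in> carrier_vec n" and w: "w \<in> carrier_vec n"
    and krylov: "\<And>k. w \<bullet> ((A ^\<^sub>m k) *\<^sub>v u) = 0"
  shows "char_poly (A + outer_mat u w) = char_poly A"
proof -
  define L where "L = map_vec (\<lambda>x::'a. [:x:])"
  have M: "char_poly_matrix A \<in> carrier_mat n n" using A by simp
  have Lu: "L u \<in> carrier_vec n" and Lw: "L (- w) \<in> carrier_vec n" using u w by (simp_all add: L_def)
  have "char_poly_matrix (A + outer_mat u w) = char_poly_matrix A + outer_mat (L u) (L (- w))"
    using A u w by (intro eq_matI) (auto simp: char_poly_matrix_def outer_mat_def L_def)
  moreover have "L (- w) \<bullet> (adj_mat (char_poly_matrix A) *\<^sub>v L u) = 0"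
    unfolding L_def
    by (rule adj_char_poly_matrix_krylov_eq_0[OF A u]) (use w krylov A u in auto)
  moreover have "det (char_poly_matrix A) \<noteq> 0"
    using degree_monic_char_poly[OF A] by (auto simp: char_poly_def)
  ultimately show ?thesis
    unfolding char_poly_def by (simp add: det_add_outer_mat[OF M Lu Lw])
qed

lemma char_poly_add_anticommutator_outer_mat:
  fixes A :: "'a::idom mat"
  assumes A: "A \<in> carrier_mat n n" and v: "v \<in> carrier_vec n" and w: "w \<in> carrier_vec n"
    and krylov: "\<And>k. w \<bullet> ((A ^\<^sub>m k) *\<^sub>v v) = 0"
  shows "char_poly (A + c \<cdot>\<^sub>m (A * outer_mat v w) + c \<cdot>\<^sub>m (outer_mat v w * A)) = char_poly A"
proof -
  define A1 where "A1 = A + outer_mat (A *\<^sub>v v) (c \<cdot>\<^sub>v w)"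
  have Av: "A *\<^sub>v v \<in> carrier_vec n" and Atw: "transpose_mat A *\<^sub>v w \<in> carrier_vec n"
    and A1: "A1 \<in> carrier_mat n n"
    using A v w by (simp_all add: A1_def)
  have Akv: "(A ^\<^sub>m k) *\<^sub>v v \<in> carrier_vec n" for k
    by (rule mult_mat_vec_carrier[OF pow_carrier_mat[OF A] v])
  have krylov_Suc: "w \<bullet> (A *\<^sub>v ((A ^\<^sub>m k) *\<^sub>v v)) = 0" for k
    using krylov[of "Suc k"] by (simp del: pow_mat.simps add: pow_mat_Suc_mult_vec[OF A v])
  have "char_poly A1 = char_poly A"
    unfolding A1_def
  proof (rule char_poly_add_outer_mat[OF A Av])
    show "(c \<cdot>\<^sub>v w) \<bullet> ((A ^\<^sub>m k) *\<^sub>v (A *\<^sub>v v)) = 0" for k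
      using krylov_Suc[of k] A v w Akv
      by (simp add: assoc_mult_mat_vec[of _ n n _ n] pow_mat_Suc_mult_vec[OF A v, symmetric])
  qed (use w in simp)
  moreover have "char_poly (A1 + outer_mat v (c \<cdot>\<^sub>v (transpose_mat A *\<^sub>v w))) = char_poly A1"
  proof (rule char_poly_add_outer_mat[OF A1 v])
    have "(A1 ^\<^sub>m k) *\<^sub>v v = (A ^\<^sub>m k) *\<^sub>v v" for k
      unfolding A1_def using A Av w v krylov by (intro pow_add_outer_mat_mult_vec) auto
    then show "(c \<cdot>\<^sub>v (transpose_mat A *\<^sub>v w)) \<bullet> ((A1 ^\<^sub>m k) *\<^sub>v v) = 0" for k
      using krylov_Suc[of k] A Akv Atw w by (simp add: transpose_vec_mult_scalar)
  qed (use Atw in simp)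
  moreover have "A + c \<cdot>\<^sub>m (A * outer_mat v w) + c \<cdot>\<^sub>m (outer_mat v w * A)
      = A1 + outer_mat v (c \<cdot>\<^sub>v (transpose_mat A *\<^sub>v w))"
    unfolding A1_def mult_outer_mat[OF A v] outer_mat_mult[OF A w] smult_outer_mat
    by (rule refl)
  ultimately show ?thesis by simp
qed

lemma phi_eq_outer_mat:
  assumes "G \<in> carrier_mat n n" and "v \<in> carrier_vec n"
  shows "phi n G cj v = outer_mat v (G *\<^sub>v map_vec cj v)"
  using assms by (intro eq_matI) (auto simp: phi_def outer_mat_def form_def mult.commute)

theorem lemma6p6:
  fixes G A :: "'a::field mat" and cj :: "'a \<Rightarrow> 'a" and v :: "'a vec" and n :: nat
  assumes char: "(2::'a) \<noteq> 0"
    and cj: "conjugation cj"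
    and G: "G \<in> carrier_mat n n"
    and nd: "nondegenerate n G cj"
    and A: "in_g n G cj A"
    and v: "v \<in> carrier_vec n"
    and iso: "\<forall>k::nat. form G cj ((A ^\<^sub>m k) *\<^sub>v v) v = 0"
  shows
    "((cj \<noteq> id \<and> (\<forall>u\<in>carrier_vec n. \<forall>w\<in>carrier_vec n. form G cj u w = cj (form G cj w u)))
        \<longrightarrow> (\<forall>c. cj c = - c \<longrightarrow> char_poly (A + c \<cdot>\<^sub>m phi n G cj v) = char_poly A))
     \<and> ((cj = id \<and> (\<forall>u\<in>carrier_vec n. \<forall>w\<in>carrier_vec n. form G cj u w = - form G cj w u))
        \<longrightarrow> (\<forall>c. char_poly (A + c \<cdot>\<^sub>m phi n G cj v) = char_poly A))
     \<and> ((cj = id \<and> (\<forall>u\<in>carrier_vec n. \<forall>w\<in>carrier_vec n. form G cj u w = form G cj w u))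
        \<longrightarrow> (\<forall>c. char_poly (A + c \<cdot>\<^sub>m (A * phi n G cj v) + c \<cdot>\<^sub>m (phi n G cj v * A)) = char_poly A))"
proof -
  define w where "w = G *\<^sub>v map_vec cj v"
  have w: "w \<in> carrier_vec n" using G v by (simp add: w_def)
  have A_mat: "A \<in> carrier_mat n n" using A by (simp add: in_g_def)
  have phi: "phi n G cj v = outer_mat v w" using G v by (simp add: w_def phi_eq_outer_mat)
  have krylov: "w \<bullet> ((A ^\<^sub>m k) *\<^sub>v v) = 0" for k
    using iso comm_scalar_prod[OF mult_mat_vec_carrier[OF pow_carrier_mat[OF A_mat] v] w]
    by (simp add: form_def w_def)
  have rank_one: "char_poly (A + c \<cdot>\<^sub>m phi n G cj v) = char_poly A" for c
    unfolding phi smult_outer_mat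
    using A_mat v w krylov by (intro char_poly_add_outer_mat) auto
  have anticomm: "char_poly (A + c \<cdot>\<^sub>m (A * phi n G cj v) + c \<cdot>\<^sub>m (phi n G cj v * A)) = char_poly A" for c
    unfolding phi
    using A_mat v w krylov by (rule char_poly_add_anticommutator_outer_mat)
  show ?thesis by (intro conjI impI allI rank_one anticomm)
qed

end
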